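(* Let $T$ be a rooted tree with root $v$, with $n$ vertices and $l$ leaves, where the root is not counted as a leaf. Then $\alpha(T,v)\ge n-l-1+2^l$.
   Context: All trees are finite. Here a leaf is a non-root vertex of degree 1 (the root is never counted as a leaf, even if it has degree 1). A subtree is a nonempty vertex set inducing a connected subgraph, and $\alpha(T,v)$ is the number of subtrees of $T$ containing $v$. *)

theory Defs
  imports Main
begin

definition simple_graph :: "'a set \<Rightarrow> ('a \<Rightarrow> 'a \<Rightarrow> bool) \<Rightarrow> bool" where
  "simple_graph V E \<longleftrightarrow> finite V \<and> (\<forall>x y. E x y \<longrightarrow> x \<in> V \<and> y \<in> V)
     \<and> (\<forall>x y. E x y \<longrightarrow> E y x) \<and> (\<forall>x. \<not> E x x)"

definition induced_connected :: "('a \<Rightarrow> 'a \<Rightarrow> bool) \<Rightarrow> 'a set \<Rightarrow> bool" where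
  "induced_connected E S \<longleftrightarrow>
     (\<forall>x\<in>S. \<forall>y\<in>S. (\<lambda>a b. a \<in> S \<and> b \<in> S \<and> E a b)\<^sup>*\<^sup>* x y)"

definition is_cycle :: "('a \<Rightarrow> 'a \<Rightarrow> bool) \<Rightarrow> 'a list \<Rightarrow> bool" where
  "is_cycle E cs \<longleftrightarrow> length cs \<ge> 3 \<and> distinct cs
     \<and> (\<forall>i. Suc i < length cs \<longrightarrow> E (cs ! i) (cs ! Suc i))
     \<and> E (last cs) (hd cs)"

definition is_tree :: "'a set \<Rightarrow> ('a \<Rightarrow> 'a \<Rightarrow> bool) \<Rightarrow> bool" where
  "is_tree V E \<longleftrightarrow> simple_graph V E \<and> V \<noteq> {} \<and> induced_connected E V
     \<and> (\<nexists>cs. is_cycle E cs)"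

definition degree :: "'a set \<Rightarrow> ('a \<Rightarrow> 'a \<Rightarrow> bool) \<Rightarrow> 'a \<Rightarrow> nat" where
  "degree V E u = card {w \<in> V. E u w}"

definition leaves :: "'a set \<Rightarrow> ('a \<Rightarrow> 'a \<Rightarrow> bool) \<Rightarrow> 'a \<Rightarrow> 'a set" where
  "leaves V E r = {u \<in> V. u \<noteq> r \<and> degree V E u = 1}"

definition subtrees :: "'a set \<Rightarrow> ('a \<Rightarrow> 'a \<Rightarrow> bool) \<Rightarrow> 'a set set" where
  "subtrees V E = {S. S \<subseteq> V \<and> S \<noteq> {} \<and> induced_connected E S}"

definition alpha :: "'a set \<Rightarrow> ('a \<Rightarrow> 'a \<Rightarrow> bool) \<Rightarrow> 'a \<Rightarrow> nat" where
  "alpha V E v = card {S \<in> subtrees V E. v \<in> S}"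

end

theory Submission
  imports Defs
begin

text \<open>Two disjoint families of subtrees containing the root v are exhibited. Deleting any set of
leaves from the tree leaves it connected, which gives 2^l subtrees. For each of the n - l - 1
inner vertices w, the component of v in T - w is a subtree; it determines w, being adjacent to
it, and it differs from every member of the first family, which all contain w.\<close>

definition component :: "('a \<Rightarrow> 'a \<Rightarrow> bool) \<Rightarrow> 'a set \<Rightarrow> 'a \<Rightarrow> 'a set" where
  "component E S v = {y. (\<lambda>a b. a \<in> S \<and> b \<in> S \<and> E a b)\<^sup>*\<^sup>* v y}"

lemma self_in_component: "v \<in> component E S v"
  by (simp add: component_def)

lemma component_subset:
  assumes "v \<in> S"
  shows "component E S v \<subseteq> S"
proof
  fix y assume "y \<in> component E S v"
  then have "(\<lambda>a b. a \<in> S \<and> b \<in> S \<and> E a b)\<^sup>*\<^sup>* v y" by (simp add: component_def)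
  then show "y \<in> S" by (induction rule: rtranclp_induct) (use assms in auto)
qed

lemma component_closed:
  assumes "a \<in> component E S v" "b \<in> S" "E a b" "v \<in> S"
  shows "b \<in> component E S v"
  using assms component_subset[OF assms(4)] unfolding component_def
  by (auto intro: rtranclp.rtrancl_into_rtrancl)

lemma component_connected:
  assumes "symp E"
  shows "induced_connected E (component E S v)"
  unfolding induced_connected_def
proof (intro ballI)
  let ?C = "component E S v"
  let ?Q = "\<lambda>a b. a \<in> ?C \<and> b \<in> ?C \<and> E a b"
  have reach: "?Q\<^sup>*\<^sup>* v y" if "y \<in> ?C" for y
  proof -
    have "(\<lambda>a b. a \<in> S \<and> b \<in> S \<and> E a b)\<^sup>*\<^sup>* v y"
      using that by (simp add: component_def)
    then show ?thesis
    proof (induction rule: rtranclp_induct)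
      case (step y z)
      then have "?Q y z"
        unfolding component_def by (auto intro: rtranclp.rtrancl_into_rtrancl)
      with step.IH show ?case by (rule rtranclp.rtrancl_into_rtrancl)
    qed simp
  qed
  have "symp ?Q" using assms by (auto intro!: sympI dest: sympD)
  then have "symp ?Q\<^sup>*\<^sup>*" by (rule symp_rtranclp)
  fix x y assume "x \<in> ?C" "y \<in> ?C"
  then show "?Q\<^sup>*\<^sup>* x y"
    using reach \<open>symp ?Q\<^sup>*\<^sup>*\<close> by (meson rtranclp_trans sympD)
qed

lemma component_Diff_adjacent:
  assumes "induced_connected E V" "v \<in> V" "w \<in> V" "w \<noteq> v"
  shows "\<exists>a \<in> component E (V - {w}) v. E a w"
proof -
  let ?C = "component E (V - {w}) v"
  have "y \<in> ?C \<or> (\<exists>a \<in> ?C. E a w)"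
    if "(\<lambda>a b. a \<in> V \<and> b \<in> V \<and> E a b)\<^sup>*\<^sup>* v y" for y
    using that
  proof (induction rule: rtranclp_induct)
    case base
    show ?case by (simp add: self_in_component)
  next
    case (step y z)
    then show ?case using component_closed[of y E "V - {w}" v z] assms(2,4) by blast
  qed
  moreover have "(\<lambda>a b. a \<in> V \<and> b \<in> V \<and> E a b)\<^sup>*\<^sup>* v w"
    using assms(1-3) unfolding induced_connected_def by blast
  ultimately show ?thesis
    using component_subset[of v "V - {w}" E] assms(2,4) by blast
qed

lemma inj_on_component_Diff:
  assumes "induced_connected E V" "v \<in> V"
  shows "inj_on (\<lambda>w. component E (V - {w}) v) (V - {v})"
proof (rule inj_onI, rule ccontr)
  fix w w' assume w: "w \<in> V - {v}" and w': "w' \<in> V - {v}" and ne: "w \<noteq> w'"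
    and eq: "component E (V - {w}) v = component E (V - {w'}) v"
  obtain a where "a \<in> component E (V - {w'}) v" "E a w'"
    using component_Diff_adjacent[OF assms] w' by blast
  then have "w' \<in> component E (V - {w}) v"
    using component_closed[of a E "V - {w}" v w'] eq w w' ne assms(2) by auto
  then show False
    using eq component_subset[of v "V - {w'}" E] w' assms(2) by blast
qed

text \<open>A walk through the pendant vertex u enters and leaves it via p, so the detour can be cut.\<close>

lemma induced_connected_Diff_pendant:
  assumes conn: "induced_connected E S" and "symp E"
    and pendant: "\<And>w. w \<in> S \<Longrightarrow> E u w \<Longrightarrow> w = p"
  shows "induced_connected E (S - {u})"
proof -
  let ?R = "\<lambda>a b. a \<in> S \<and> b \<in> S \<and> E a b"
  let ?R' = "\<lambda>a b. a \<in> S - {u} \<and> b \<in> S - {u} \<and> E a b"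
  have avoid: "(y \<noteq> u \<longrightarrow> ?R'\<^sup>*\<^sup>* x y) \<and> (y = u \<longrightarrow> ?R'\<^sup>*\<^sup>* x p)"
    if "?R\<^sup>*\<^sup>* x y" "x \<noteq> u" for x y
    using that
  proof (induction rule: rtranclp_induct)
    case (step y z)
    show ?case
    proof (cases "y = u \<or> z = u")
      case True
      then have "y = u \<or> y = p" "z = u \<or> z = p"
        using step.hyps(2) pendant sympD[OF \<open>symp E\<close>] by blast+
      with step.IH step.prems show ?thesis by auto
    next
      case False
      with step.IH step.prems step.hyps(2) show ?thesis
        by (auto intro: rtranclp.rtrancl_into_rtrancl)
    qed
  qed simp
  show ?thesis
    using conn avoid unfolding induced_connected_def by blast
qed

lemma induced_connected_Diff_pendants:
  assumes "induced_connected E V" "symp E" "finite B"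
    and "\<And>u. u \<in> B \<Longrightarrow> degree V E u = 1"
  shows "induced_connected E (V - B)"
  using assms(3,4)
proof (induction B rule: finite_induct)
  case empty
  then show ?case using assms(1) by simp
next
  case (insert u B)
  have "card {w \<in> V. E u w} = 1"
    using insert.prems[of u] unfolding degree_def by simp
  then obtain p where "{w \<in> V. E u w} = {p}" by (rule card_1_singletonE)
  then have "induced_connected E (V - B - {u})"
    using induced_connected_Diff_pendant[OF insert.IH \<open>symp E\<close>] insert.prems by blast
  moreover have "V - insert u B = V - B - {u}" by blast
  ultimately show ?case by simp
qed

lemma finite_subtrees: "finite V \<Longrightarrow> finite (subtrees V E)"
  unfolding subtrees_def by (rule finite_subset[of _ "Pow V"]) auto

theorem alpha_ge_connected:
  assumes "simple_graph V E" "induced_connected E V" "v \<in> V"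
  shows "2 ^ card (leaves V E v) + card (V - leaves V E v - {v}) \<le> alpha V E v"
proof -
  have "finite V" and "symp E"
    using assms(1) unfolding simple_graph_def by (auto intro: sympI)
  define L where "L = leaves V E v"
  define T where "T = {S \<in> subtrees V E. v \<in> S}"
  define C where "C w = component E (V - {w}) v" for w
  have "L \<subseteq> V" "v \<notin> L" "finite L"
    using \<open>finite V\<close> finite_subset unfolding L_def leaves_def by auto
  have leaves_removed: "V - B \<in> T" if "B \<subseteq> L" for B
  proof -
    have "finite B" using that \<open>finite L\<close> by (rule finite_subset)
    moreover have "degree V E u = 1" if "u \<in> B" for u
      using that \<open>B \<subseteq> L\<close> unfolding L_def leaves_def by auto
    ultimately have "induced_connected E (V - B)"
      by (rule induced_connected_Diff_pendants[OF assms(2) \<open>symp E\<close>])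
    moreover have "v \<in> V - B" using that assms(3) \<open>v \<notin> L\<close> by blast
    ultimately show ?thesis unfolding T_def subtrees_def by blast
  qed
  have component_removed: "C w \<in> T" if "w \<in> V - {v}" for w
    using component_connected[OF \<open>symp E\<close>] self_in_component[of v E "V - {w}"]
      component_subset[of v "V - {w}" E] that assms(3)
    unfolding C_def T_def subtrees_def by auto
  have distinct: "V - B \<noteq> C w" if "B \<subseteq> L" "w \<in> V - L - {v}" for B w
  proof -
    have "w \<in> V - B" using that by blast
    moreover have "w \<notin> C w"
      using component_subset[of v "V - {w}" E] that assms(3) unfolding C_def by blast
    ultimately show ?thesis by blast
  qed
  have "inj_on C (V - L - {v})"
    using inj_on_component_Diff[OF assms(2,3)] unfolding C_def by (rule inj_on_subset) blast
  then have "card (C ` (V - L - {v})) = card (V - L - {v})" by (rule card_image)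
  moreover have "card ((\<lambda>B. V - B) ` Pow L) = 2 ^ card L"
    using \<open>L \<subseteq> V\<close> \<open>finite L\<close> by (subst card_image) (auto intro!: inj_onI simp: card_Pow)
  moreover have "card ((\<lambda>B. V - B) ` Pow L \<union> C ` (V - L - {v})) \<le> card T"
    using leaves_removed component_removed finite_subtrees[OF \<open>finite V\<close>]
    unfolding T_def by (intro card_mono) auto
  moreover have "(\<lambda>B. V - B) ` Pow L \<inter> C ` (V - L - {v}) = {}"
    using distinct by blast
  ultimately show ?thesis
    using \<open>finite V\<close> \<open>finite L\<close> unfolding alpha_def T_def[symmetric] L_def[symmetric]
    by (simp add: card_Un_disjoint)
qed

theorem mainTheorem9:
  fixes V :: "'a set" and E :: "'a \<Rightarrow> 'a \<Rightarrow> bool" and v :: 'a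
  assumes "is_tree V E" and "v \<in> V"
  shows "int (alpha V E v) \<ge>
           int (card V) - int (card (leaves V E v)) - 1 + 2 ^ card (leaves V E v)"
proof -
  have graph: "simple_graph V E" and conn: "induced_connected E V"
    using assms(1) unfolding is_tree_def by auto
  then have "finite V" by (simp add: simple_graph_def)
  have "insert v (leaves V E v) \<subseteq> V" "v \<notin> leaves V E v"
    using assms(2) unfolding leaves_def by auto
  moreover have "finite (leaves V E v)"
    using \<open>finite V\<close> unfolding leaves_def by simp
  ultimately have "card V \<ge> card (leaves V E v) + 1"
    and "card (V - leaves V E v - {v}) = card V - (card (leaves V E v) + 1)"
    using card_mono[OF \<open>finite V\<close>, of "insert v (leaves V E v)"]
      card_Diff_subset[of "insert v (leaves V E v)" V]
    by (auto simp: Diff_insert2[symmetric])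
  then have "int (card (V - leaves V E v - {v})) = int (card V) - int (card (leaves V E v)) - 1"
    by simp
  moreover have "int (2 ^ card (leaves V E v) + card (V - leaves V E v - {v})) \<le> int (alpha V E v)"
    using alpha_ge_connected[OF graph conn assms(2)] by (simp only: of_nat_le_iff)
  ultimately show ?thesis by simp
qed

end
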